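(* Let $a>1$, $C_j(n,a)=\binom{n}{j}\left(\frac{1+a}{2}\right)^{n-j}\left(\frac{1-a}{2}\right)^j$ and $b_j=-\frac{i}{\sqrt2}(1-\frac{2j}{n})$. Then for every $g\in\mathtt{F}(\mathbb{C})$ there exists a unique $f\in\mathtt{F}(\mathbb{C})$ such that for every $z\in\mathbb{C}$, $$g(z)=\lim_{n\to\infty}\sum_{j=0}^nC_j(n,a)\mathcal{W}_{b_j}[f](z).$$
   Context: $\mathtt{F}(\mathbb{C})$ is the Fock space of entire functions $f$ with $\frac1\pi\int_{\mathbb{C}}|f(z)|^2e^{-|z|^2}d\lambda(z)<\infty$. For $c\in\mathbb{C}$ the Weyl operator is $\mathcal{W}_cf(z)=f(z-c)e^{z\bar c-|c|^2/2}$. *)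

theory Defs
  imports "HOL-Analysis.Analysis"
begin

text \<open>Fock space: entire functions with finite Gaussian-weighted L2 norm
  (the factor 1/pi does not affect finiteness).\<close>
definition fock :: "(complex \<Rightarrow> complex) \<Rightarrow> bool" where
  "fock f \<longleftrightarrow> f holomorphic_on UNIV \<and>
     integrable lborel (\<lambda>z::complex. (cmod (f z))\<^sup>2 * exp (- (cmod z)\<^sup>2))"

definition weyl :: "complex \<Rightarrow> (complex \<Rightarrow> complex) \<Rightarrow> complex \<Rightarrow> complex" where
  "weyl c f z = f (z - c) * exp (z * cnj c - complex_of_real ((cmod c)\<^sup>2 / 2))"

definition Ccoef :: "nat \<Rightarrow> nat \<Rightarrow> real \<Rightarrow> real" where
  "Ccoef j n a = real (n choose j) * ((1 + a) / 2) ^ (n - j) * ((1 - a) / 2) ^ j"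

definition bcoef :: "nat \<Rightarrow> nat \<Rightarrow> complex" where
  "bcoef n j = - (\<i> / complex_of_real (sqrt 2)) * (1 - 2 * of_nat j / of_nat n)"

end

theory Submission
  imports Defs "HOL-Complex_Analysis.Cauchy_Integral_Formula"
begin

text \<open>
  Put \<open>c = -\<i> a / \<surd>2\<close>. For fixed \<open>z\<close>, the function \<open>F(s) = \<W>\<^bsub>-\<i> s/\<surd>2\<^esub> f (z)\<close> of a real
  variable \<open>s\<close> extends to an entire function, and the sum in the theorem is
  \<open>\<Sum>\<^sub>j C\<^sub>j(n,a) F(1 - 2j/n)\<close>. The exponential generating function of the moments
  \<open>\<Sum>\<^sub>j C\<^sub>j(n,a) (n - 2j)\<^sup>k\<close> is \<open>(cosh t + a sinh t)\<^sup>n\<close>; comparing it coefficientwise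
  with \<open>e\<^sup>n\<^sup>a\<^sup>t\<close> and expanding it binomially shows that the moments
  \<open>\<Sum>\<^sub>j C\<^sub>j(n,a) (1 - 2j/n)\<^sup>k\<close> are bounded by \<open>a\<^sup>k\<close> and tend to \<open>a\<^sup>k\<close>. Tannery's theorem
  applied to the Taylor series of \<open>F\<close> then gives the limit \<open>F(a) = \<W>\<^sub>c f (z)\<close>.
  Since \<open>\<W>\<^sub>c\<close> maps the Fock space onto itself with inverse \<open>\<W>\<^bsub>-c\<^esub>\<close>, the unique solution
  is \<open>f = \<W>\<^bsub>-c\<^esub> g\<close>.
\<close>

no_notation vec_nth (infixl "$" 90)
notation fps_nth (infixl "$" 75)

lemma abs_fps_power_nth_le:
  fixes X Y :: "'a::linordered_idom fps"
  assumes "\<And>i. \<bar>X $ i\<bar> \<le> Y $ i"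
  shows "\<bar>(X ^ n) $ k\<bar> \<le> (Y ^ n) $ k"
proof (induction n arbitrary: k)
  case 0
  then show ?case by (simp add: fps_one_nth)
next
  case (Suc n)
  have "\<bar>(X ^ Suc n) $ k\<bar> = \<bar>\<Sum>i=0..k. X $ i * (X ^ n) $ (k - i)\<bar>"
    by (simp add: fps_mult_nth)
  also have "\<dots> \<le> (\<Sum>i=0..k. \<bar>X $ i\<bar> * \<bar>(X ^ n) $ (k - i)\<bar>)"
    by (rule order_trans[OF sum_abs]) (simp add: abs_mult)
  also have "\<dots> \<le> (\<Sum>i=0..k. Y $ i * (Y ^ n) $ (k - i))"
    by (intro sum_mono mult_mono assms Suc.IH) (auto intro: order_trans[OF abs_ge_zero assms])
  also have "\<dots> = (Y ^ Suc n) $ k"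
    by (simp add: fps_mult_nth)
  finally show ?case .
qed

lemma binomial_div_power_tendsto:
  assumes "r \<le> k"
  shows "(\<lambda>n. real (n choose r) / real n ^ k) \<longlonglongrightarrow> (if r = k then 1 / fact k else 0)"
proof -
  have "(\<lambda>n. (\<Prod>i<r. 1 - real i / real n) / fact r * (1 / real n) ^ (k - r))
          \<longlonglongrightarrow> (\<Prod>i<r. 1 - 0) / fact r * 0 ^ (k - r)"
    by (intro tendsto_intros lim_const_over_n lim_1_over_n) simp
  moreover have "(\<Prod>i<r. 1 - real i / real n) / fact r * (1 / real n) ^ (k - r)
      = real (n choose r) / real n ^ k" if "n > 0" for n
  proof -
    have "real (n choose r) = (\<Prod>i<r. real n - real i) / fact r"
      by (simp add: binomial_gbinomial gbinomial_prod_rev atLeast0LessThan)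
    also have "(\<Prod>i<r. real n - real i) = (\<Prod>i<r. real n * (1 - real i / real n))"
      using that by (intro prod.cong) (auto simp: field_simps)
    also have "\<dots> = real n ^ r * (\<Prod>i<r. 1 - real i / real n)"
      by (simp add: prod.distrib)
    finally have "real (n choose r) = real n ^ r * (\<Prod>i<r. 1 - real i / real n) / fact r" .
    moreover have "real n ^ k = real n ^ r * real n ^ (k - r)"
      using assms by (simp flip: power_add)
    ultimately show ?thesis
      using that by (simp add: power_one_over)
  qed
  ultimately have "(\<lambda>n. real (n choose r) / real n ^ k) \<longlonglongrightarrow> (\<Prod>i<r. 1 - 0) / fact r * 0 ^ (k - r)"
    by (elim Lim_transform_eventually eventually_mono[OF eventually_gt_at_top[of 0]])
  then show ?thesis
    using assms by (cases "r = k") (simp_all add: zero_power)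
qed

lemma fps_power_nth_div_tendsto:
  fixes \<phi> :: "real fps"
  assumes "\<phi> $ 0 = 0"
  shows "(\<lambda>n. ((1 + \<phi>) ^ n) $ k / real n ^ k) \<longlonglongrightarrow> (\<phi> $ 1) ^ k / fact k"
proof -
  have expand: "((1 + \<phi>) ^ n) $ k = (\<Sum>r\<le>k. real (n choose r) * (\<phi> ^ r) $ k)" if "k \<le> n" for n
  proof -
    have "(1 + \<phi>) ^ n = (\<Sum>r\<le>n. of_nat (n choose r) * \<phi> ^ r)"
      using binomial_ring[of \<phi> 1 n] by (simp add: add.commute)
    then have "((1 + \<phi>) ^ n) $ k = (\<Sum>r\<le>n. real (n choose r) * (\<phi> ^ r) $ k)"
      by (simp add: fps_sum_nth fps_of_nat[symmetric])
    also have "\<dots> = (\<Sum>r\<le>k. real (n choose r) * (\<phi> ^ r) $ k)"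
      by (rule sum.mono_neutral_right) (use that startsby_zero_power_prefix[OF assms] in auto)
    finally show ?thesis .
  qed
  have "(\<lambda>n. \<Sum>r\<le>k. real (n choose r) / real n ^ k * (\<phi> ^ r) $ k)
          \<longlonglongrightarrow> (\<Sum>r\<le>k. (if r = k then 1 / fact k else 0) * (\<phi> ^ r) $ k)"
    by (intro tendsto_sum tendsto_mult_right binomial_div_power_tendsto) simp
  also have "(\<Sum>r\<le>k. (if r = k then 1 / fact k else 0) * (\<phi> ^ r) $ k) = (\<phi> $ 1) ^ k / fact k"
    using startsby_zero_power_nth_same[OF assms] by (simp add: mult_delta_left)
  finally have "(\<lambda>n. \<Sum>r\<le>k. real (n choose r) / real n ^ k * (\<phi> ^ r) $ k)
                  \<longlonglongrightarrow> (\<phi> $ 1) ^ k / fact k" .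
  moreover have "\<forall>\<^sub>F n in sequentially.
      (\<Sum>r\<le>k. real (n choose r) / real n ^ k * (\<phi> ^ r) $ k) = ((1 + \<phi>) ^ n) $ k / real n ^ k"
    using eventually_ge_at_top[of k] by eventually_elim (simp add: expand sum_divide_distrib)
  ultimately show ?thesis
    by (rule Lim_transform_eventually)
qed

definition Ccoef_fps :: "real \<Rightarrow> real fps" where
  "Ccoef_fps a = fps_const ((1 + a) / 2) * fps_exp 1 + fps_const ((1 - a) / 2) * fps_exp (-1)"

lemma fps_nth_Ccoef_fps: "Ccoef_fps a $ i = ((1 + a) / 2 + (1 - a) / 2 * (-1) ^ i) / fact i"
  by (simp add: Ccoef_fps_def add_divide_distrib)

lemma abs_fps_nth_Ccoef_fps_le:
  assumes "a \<ge> 1"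
  shows "\<bar>Ccoef_fps a $ i\<bar> \<le> fps_exp a $ i"
proof -
  have "\<bar>(1 + a) / 2 + (1 - a) / 2 * (-1) ^ i\<bar> \<le> a ^ i"
  proof (cases "even i")
    case True
    then show ?thesis
      using assms by (simp add: one_le_power field_simps)
  next
    case False
    then have "a ^ 1 \<le> a ^ i"
      using assms odd_pos[OF False] by (intro power_increasing) auto
    then show ?thesis
      using False assms by (simp add: field_simps)
  qed
  then show ?thesis
    by (simp add: fps_nth_Ccoef_fps abs_divide divide_right_mono)
qed

lemma fps_nth_Ccoef_fps_power:
  "(Ccoef_fps a ^ n) $ k = (\<Sum>j\<le>n. Ccoef j n a * (real n - 2 * real j) ^ k) / fact k"
proof -
  let ?p = "(1 + a) / 2" and ?q = "(1 - a) / 2"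
  have "Ccoef_fps a ^ n = (fps_const ?q * fps_exp (-1) + fps_const ?p * fps_exp 1) ^ n"
    by (simp add: Ccoef_fps_def add.commute)
  also have "\<dots> = (\<Sum>j\<le>n. of_nat (n choose j) * (fps_const ?q * fps_exp (-1)) ^ j
                              * (fps_const ?p * fps_exp 1) ^ (n - j))"
    by (rule binomial_ring)
  also have "\<dots> = (\<Sum>j\<le>n. fps_const (Ccoef j n a) * fps_exp (real n - 2 * real j))"
  proof (rule sum.cong[OF refl])
    fix j assume "j \<in> {..n}"
    then have "fps_exp (-1) ^ j * fps_exp 1 ^ (n - j) = fps_exp (real n - 2 * real j)"
      by (simp add: fps_exp_power_mult of_nat_diff flip: fps_exp_add_mult)
    then show "of_nat (n choose j) * (fps_const ?q * fps_exp (-1)) ^ j * (fps_const ?p * fps_exp 1) ^ (n - j)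
      = fps_const (Ccoef j n a) * fps_exp (real n - 2 * real j)"
      by (simp add: Ccoef_def power_mult_distrib fps_const_power mult_ac
          flip: fps_of_nat fps_const_mult)
  qed
  finally show ?thesis
    by (simp add: fps_sum_nth sum_divide_distrib)
qed

definition Ccoef_moment :: "real \<Rightarrow> nat \<Rightarrow> nat \<Rightarrow> real" where
  "Ccoef_moment a n k = (\<Sum>j\<le>n. Ccoef j n a * (1 - 2 * real j / real n) ^ k)"

lemma Ccoef_moment_eq_fps_nth:
  assumes "n > 0"
  shows "Ccoef_moment a n k = (Ccoef_fps a ^ n) $ k * fact k / real n ^ k"
proof -
  have "1 - 2 * real j / real n = (real n - 2 * real j) / real n" for j
    using assms by (simp add: diff_divide_distrib)
  then have "Ccoef_moment a n k = (\<Sum>j\<le>n. Ccoef j n a * (real n - 2 * real j) ^ k) / real n ^ k"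
    by (simp add: Ccoef_moment_def power_divide sum_divide_distrib)
  then show ?thesis
    by (simp add: fps_nth_Ccoef_fps_power)
qed

lemma abs_Ccoef_moment_le:
  assumes "a \<ge> 1"
  shows "\<bar>Ccoef_moment a n k\<bar> \<le> a ^ k"
proof (cases "n = 0")
  case True
  then show ?thesis
    using assms by (simp add: Ccoef_moment_def Ccoef_def one_le_power)
next
  case False
  have "\<bar>(Ccoef_fps a ^ n) $ k\<bar> \<le> (fps_exp a ^ n) $ k"
    by (intro abs_fps_power_nth_le abs_fps_nth_Ccoef_fps_le assms)
  also have "\<dots> = (real n * a) ^ k / fact k"
    by (simp add: fps_exp_power_mult)
  finally have "\<bar>(Ccoef_fps a ^ n) $ k\<bar> * fact k / real n ^ k \<le> (real n * a) ^ k / fact k * fact k / real n ^ k"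
    by (intro divide_right_mono mult_right_mono) auto
  with False show ?thesis
    by (simp add: Ccoef_moment_eq_fps_nth abs_mult abs_divide power_mult_distrib)
qed

lemma Ccoef_moment_tendsto: "(\<lambda>n. Ccoef_moment a n k) \<longlonglongrightarrow> a ^ k"
proof -
  define \<phi> where "\<phi> = Ccoef_fps a - 1"
  have "\<phi> $ 0 = 0" and "\<phi> $ 1 = a"
    by (simp_all add: \<phi>_def fps_nth_Ccoef_fps field_simps)
  then have "(\<lambda>n. (Ccoef_fps a ^ n) $ k / real n ^ k * fact k) \<longlonglongrightarrow> a ^ k / fact k * fact k"
    using fps_power_nth_div_tendsto[of \<phi> k] by (intro tendsto_mult_right) (simp add: \<phi>_def)
  then have "(\<lambda>n. (Ccoef_fps a ^ n) $ k / real n ^ k * fact k) \<longlonglongrightarrow> a ^ k"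
    by simp
  moreover have "\<forall>\<^sub>F n in sequentially. (Ccoef_fps a ^ n) $ k / real n ^ k * fact k = Ccoef_moment a n k"
    using eventually_gt_at_top[of 0] by eventually_elim (simp add: Ccoef_moment_eq_fps_nth)
  ultimately show ?thesis
    by (rule Lim_transform_eventually)
qed

lemma entire_weighted_sum_tendsto:
  fixes F :: "complex \<Rightarrow> complex" and w x :: "nat \<Rightarrow> 'i \<Rightarrow> complex"
  assumes F: "F holomorphic_on UNIV"
    and moment_tendsto: "\<And>k. (\<lambda>n. \<Sum>j\<in>J n. w n j * x n j ^ k) \<longlonglongrightarrow> b ^ k"
    and moment_bound: "\<And>n k. norm (\<Sum>j\<in>J n. w n j * x n j ^ k) \<le> B ^ k"
  shows "(\<lambda>n. \<Sum>j\<in>J n. w n j * F (x n j)) \<longlonglongrightarrow> F b"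
proof -
  define c where "c k = (deriv ^^ k) F 0 / fact k" for k
  define m where "m n k = (\<Sum>j\<in>J n. w n j * x n j ^ k)" for n k
  have taylor: "(\<lambda>k. c k * u ^ k) sums F u" for u
    using holomorphic_power_series[of F 0 "norm u + 1" u] F
    by (auto simp: c_def intro: holomorphic_on_subset)
  have summable: "summable (\<lambda>k. norm (c k * of_real B ^ k))"
    using taylor[of "of_real (\<bar>B\<bar> + 1)"]
    by (intro powser_insidea[of c "of_real (\<bar>B\<bar> + 1)"]) (auto simp: sums_iff)
  have "(\<lambda>k. \<Sum>j\<in>J n. w n j * (c k * x n j ^ k)) sums (\<Sum>j\<in>J n. w n j * F (x n j))" for n
    by (intro sums_sum sums_mult taylor)
  then have "(\<lambda>k. c k * m n k) sums (\<Sum>j\<in>J n. w n j * F (x n j))" for n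
    by (simp add: m_def sum_distrib_left mult_ac)
  moreover have "(\<lambda>n. \<Sum>k. c k * m n k) \<longlonglongrightarrow> (\<Sum>k. c k * b ^ k)"
  proof (rule tannerys_theorem[THEN conjunct2, THEN conjunct2])
    show "(\<lambda>n. c k * m n k) \<longlonglongrightarrow> c k * b ^ k" for k
      using moment_tendsto by (intro tendsto_mult_left) (simp add: m_def)
    have "norm (m n k) \<le> \<bar>B\<bar> ^ k" for k n
      using moment_bound[of n k] by (metis abs_ge_self order_trans power_abs m_def)
    then have "norm (c k * m n k) \<le> norm (c k * of_real B ^ k)" for k n
      by (simp add: norm_mult norm_power mult_left_mono)
    then show "\<forall>\<^sub>F (k, n) in sequentially \<times>\<^sub>F sequentially. norm (c k * m n k) \<le> norm (c k * of_real B ^ k)"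
      by (simp add: always_eventually)
  qed (use summable in auto)
  ultimately show ?thesis
    using taylor[of b] by (simp add: sums_iff)
qed

lemma weyl_weyl_uminus: "weyl c (weyl (- c) g) = g"
proof
  fix z
  have "complex_of_real ((cmod c)\<^sup>2) = c * cnj c"
    by (rule complex_norm_square)
  then have "(- ((z - c) * cnj c) - complex_of_real ((cmod c)\<^sup>2 / 2))
               + (z * cnj c - complex_of_real ((cmod c)\<^sup>2 / 2)) = 0"
    by (simp add: algebra_simps flip: of_real_divide) (simp add: field_simps)
  then show "weyl c (weyl (- c) g) z = g z"
    by (simp add: weyl_def mult.assoc flip: exp_add)
qed

lemma weyl_eq_iff: "weyl c f = g \<longleftrightarrow> f = weyl (- c) g"
  using weyl_weyl_uminus[of c g] weyl_weyl_uminus[of "- c" f] by auto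

lemma norm_weyl_weighted:
  "(cmod (weyl c g z))\<^sup>2 * exp (- (cmod z)\<^sup>2) = (cmod (g (z - c)))\<^sup>2 * exp (- (cmod (z - c))\<^sup>2)"
proof -
  have "(exp (Re (z * cnj c) - (cmod c)\<^sup>2 / 2))\<^sup>2 * exp (- (cmod z)\<^sup>2)
          = exp (2 * (Re (z * cnj c) - (cmod c)\<^sup>2 / 2) + (- (cmod z)\<^sup>2))"
    by (simp add: power2_eq_square flip: exp_add)
  also have "2 * (Re (z * cnj c) - (cmod c)\<^sup>2 / 2) + (- (cmod z)\<^sup>2) = - (cmod (z - c))\<^sup>2"
    unfolding cmod_power2 by (simp add: power2_eq_square algebra_simps)
  finally show ?thesis
    by (simp add: weyl_def norm_mult power_mult_distrib mult.assoc)
qed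

lemma fock_weyl:
  assumes "fock g"
  shows "fock (weyl c g)"
proof -
  define h where "h z = (cmod (g z))\<^sup>2 * exp (- (cmod z)\<^sup>2)" for z
  have hol: "g holomorphic_on UNIV" and int: "integrable lborel h"
    using assms by (auto simp: fock_def h_def[abs_def])
  have "(g \<circ> (\<lambda>z. z - c)) holomorphic_on UNIV"
    by (rule holomorphic_on_compose_gen[OF _ hol]) (auto intro: holomorphic_intros)
  then have "weyl c g holomorphic_on UNIV"
    unfolding weyl_def[abs_def] o_def by (intro holomorphic_intros)
  moreover have "integrable lborel (\<lambda>z. h (- c + z))"
  proof -
    have "integrable (distr lborel borel ((+) (- c))) h"
      using int by (simp add: lborel_distr_plus)
    moreover have "h \<in> borel_measurable borel"
      using borel_measurable_integrable[OF int] by (simp add: measurable_lborel1)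
    ultimately show ?thesis
      by (simp add: integrable_distr_eq)
  qed
  ultimately show ?thesis
    by (simp add: fock_def norm_weyl_weighted h_def)
qed

lemma weyl_sum_tendsto:
  assumes f: "f holomorphic_on UNIV" and "a \<ge> 1"
  shows "(\<lambda>n. \<Sum>j\<le>n. complex_of_real (Ccoef j n a) * weyl (bcoef n j) f z)
           \<longlonglongrightarrow> weyl (- (\<i> / complex_of_real (sqrt 2)) * complex_of_real a) f z"
proof -
  define d where "d = - (\<i> / complex_of_real (sqrt 2))"
  \<comment> \<open>\<open>weyl (d * s) f z\<close> is not holomorphic in \<open>s\<close>; \<open>F\<close> is the entire extension of its restriction to the reals\<close>
  define F where "F s = f (z - d * s) * exp (z * cnj d * s - s\<^sup>2 / 4)" for s
  have "(f \<circ> (\<lambda>s. z - d * s)) holomorphic_on UNIV"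
    by (rule holomorphic_on_compose_gen[OF _ f]) (auto intro: holomorphic_intros)
  then have "F holomorphic_on UNIV"
    unfolding F_def[abs_def] o_def by (intro holomorphic_intros) auto
  have weyl_eq: "weyl (d * of_real s) f z = F (of_real s)" for s
  proof -
    have norm_sq: "(cmod (d * of_real s))\<^sup>2 / 2 = s\<^sup>2 / 4"
      by (simp add: d_def norm_mult norm_divide power_mult_distrib power_divide)
    show ?thesis
      unfolding weyl_def F_def norm_sq by (simp add: mult.assoc)
  qed
  have moment: "(\<Sum>j\<le>n. complex_of_real (Ccoef j n a) * of_real (1 - 2 * real j / real n) ^ k)
                  = of_real (Ccoef_moment a n k)" for n k
    by (simp add: Ccoef_moment_def)
  have "(\<lambda>n. \<Sum>j\<le>n. complex_of_real (Ccoef j n a) * of_real (1 - 2 * real j / real n) ^ k)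
          \<longlonglongrightarrow> of_real a ^ k" for k
    using tendsto_of_real[OF Ccoef_moment_tendsto[of a k], where 'a=complex]
    by (simp only: moment of_real_power)
  moreover have "norm (\<Sum>j\<le>n. complex_of_real (Ccoef j n a) * of_real (1 - 2 * real j / real n) ^ k)
                   \<le> a ^ k" for n k
    unfolding moment norm_of_real by (rule abs_Ccoef_moment_le) fact
  ultimately have "(\<lambda>n. \<Sum>j\<le>n. of_real (Ccoef j n a) * F (of_real (1 - 2 * real j / real n)))
                     \<longlonglongrightarrow> F (of_real a)"
    by (rule entire_weighted_sum_tendsto[OF \<open>F holomorphic_on UNIV\<close>])
  moreover have "bcoef n j = d * of_real (1 - 2 * real j / real n)" for n j
    by (simp add: bcoef_def d_def)
  ultimately show ?thesis
    by (simp only: weyl_eq flip: d_def)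
qed

theorem theorem3p32:
  fixes a :: real
  assumes "a > 1"
  shows "\<forall>g. fock g \<longrightarrow>
    (\<exists>!f. fock f \<and>
       (\<forall>z. (\<lambda>n. \<Sum>j\<le>n. complex_of_real (Ccoef j n a) * weyl (bcoef n j) f z)
               \<longlonglongrightarrow> g z))"
proof (intro allI impI)
  fix g assume "fock g"
  define c where "c = - (\<i> / complex_of_real (sqrt 2)) * complex_of_real a"
  have "(\<forall>z. (\<lambda>n. \<Sum>j\<le>n. complex_of_real (Ccoef j n a) * weyl (bcoef n j) f z) \<longlonglongrightarrow> g z)
          \<longleftrightarrow> f = weyl (- c) g" if "fock f" for f
  proof -
    have "\<And>z. (\<lambda>n. \<Sum>j\<le>n. complex_of_real (Ccoef j n a) * weyl (bcoef n j) f z) \<longlonglongrightarrow> weyl c f z"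
      using weyl_sum_tendsto[of f a] that assms by (simp add: fock_def c_def)
    then have "(\<forall>z. (\<lambda>n. \<Sum>j\<le>n. complex_of_real (Ccoef j n a) * weyl (bcoef n j) f z) \<longlonglongrightarrow> g z)
                 \<longleftrightarrow> weyl c f = g"
      by (auto intro: LIMSEQ_unique)
    then show ?thesis
      by (simp add: weyl_eq_iff)
  qed
  then show "\<exists>!f. fock f \<and>
      (\<forall>z. (\<lambda>n. \<Sum>j\<le>n. complex_of_real (Ccoef j n a) * weyl (bcoef n j) f z) \<longlonglongrightarrow> g z)"
    using fock_weyl[OF \<open>fock g\<close>] by blast
qed

end
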